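(* Let $\{x^k\}$ be generated by the MPG algorithm described in the context. Then for every $j=1,\ldots,m$ the sequence $\{F_j(x^k)\}$ is non-increasing, i.e., $F(x^{k+1})\preceq F(x^k)$ for every $k$ for which $x^{k+1}$ is generated.
   Context: Let $F:\mathbb{R}^n\to(\mathbb{R}\cup\{+\infty\})^m$, $F=(F_1,\ldots,F_m)$, with $F_j=G_j+H_j$ for $j=1,\ldots,m$, where: (i) each $G_j:\mathbb{R}^n\to\mathbb{R}$ is continuously differentiable and convex; (ii) each $H_j:\mathbb{R}^n\to\mathbb{R}\cup\{+\infty\}$ is proper, convex and continuous on its domain; (iii) $\mathrm{dom}(F):=\{x: F_j(x)<+\infty\ \forall j\}$ is nonempty and closed. For $u,v\in\mathbb{R}^m$, $u\preceq v$ means $u_j\le v_j$ for all $j$. For $x\in\mathrm{dom}(F)$ and $\alpha>0$ define $\psi_x(u):=\max_{j=1,\ldots,m}\big(\nabla G_j(x)^\top(u-x)+H_j(u)-H_j(x)\big)$, $p_\alpha(x):=\arg\min_{u\in\mathbb{R}^n}\psi_x(u)+\frac{1}{2\alpha}\|u-x\|^2$ (unique minimizer), and $\theta_\alpha(x):=\psi_x(p_\alpha(x))+\frac{1}{2\alpha}\|p_\alpha(x)-x\|^2$. MPG algorithm. Step 0: choose $x^0\in\mathrm{dom}(F)$, $\alpha>0$, $\gamma\in(0,2/\alpha)$, $0<\tau_1<\tau_2<1$; set $k=0$. Step 1: compute $p^k:=p_\alpha(x^k)$ and $\theta_\alpha(x^k)$. Step 2: if $\theta_\alpha(x^k)=0$,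 stop. Step 3: set $d^k:=p^k-x^k$, take $j_k^*\in\arg\max_{j}\nabla G_j(x^k)^\top d^k$, set $t=1$. Step 3.1: if $G_{j_k^*}(x^k+td^k)\le G_{j_k^*}(x^k)+t\nabla G_{j_k^*}(x^k)^\top d^k+t\frac{\gamma}{2}\|d^k\|^2$, go to Step 3.2; otherwise replace $t$ by some value in $[\tau_1 t,\tau_2 t]$ and repeat Step 3.1. Step 3.2: if $F(x^k+td^k)\preceq F(x^k)$, set $t_k=t$ and go to Step 4. Step 3.3: replace $t$ by some value in $[\tau_1 t,\tau_2 t]$; if $G_j(x^k+td^k)\le G_j(x^k)+t\nabla G_j(x^k)^\top d^k+t\frac{\gamma}{2}\|d^k\|^2$ for all $j=1,\ldots,m$, set $t_k=t$ and go to Step 4; otherwise repeat Step 3.3. Step 4: $x^{k+1}:=x^k+t_kd^k$, $k\leftarrow k+1$, go to Step 1. *)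

theory Defs
  imports "HOL-Analysis.Analysis"
begin

text \<open>Objectives are indexed by j < m (0-based). G j is real valued with gradient gradG j,
  H j is extended-real valued (value \<infinity> allowed).\<close>

definition proper_convex_ext :: "('a::real_vector \<Rightarrow> ereal) \<Rightarrow> bool" where
  "proper_convex_ext h \<longleftrightarrow>
     (\<forall>x. h x \<noteq> -\<infinity>) \<and> (\<exists>x. h x \<noteq> \<infinity>) \<and>
     (\<forall>x y t. 0 \<le> t \<and> t \<le> 1 \<longrightarrow>
        h ((1 - t) *\<^sub>R x + t *\<^sub>R y) \<le> ereal (1 - t) * h x + ereal t * h y)"

definition Fobj :: "(nat \<Rightarrow> 'a \<Rightarrow> real) \<Rightarrow> (nat \<Rightarrow> 'a \<Rightarrow> ereal) \<Rightarrow> nat \<Rightarrow> 'a \<Rightarrow> ereal" where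
  "Fobj G H j x = ereal (G j x) + H j x"

definition domF :: "nat \<Rightarrow> (nat \<Rightarrow> 'a \<Rightarrow> ereal) \<Rightarrow> 'a set" where
  "domF m H = {x. \<forall>j<m. H j x < \<infinity>}"

definition Fle :: "nat \<Rightarrow> (nat \<Rightarrow> 'a \<Rightarrow> real) \<Rightarrow> (nat \<Rightarrow> 'a \<Rightarrow> ereal) \<Rightarrow> 'a \<Rightarrow> 'a \<Rightarrow> bool" where
  "Fle m G H u v \<longleftrightarrow> (\<forall>j<m. Fobj G H j u \<le> Fobj G H j v)"

definition psi :: "nat \<Rightarrow> (nat \<Rightarrow> 'a::real_inner \<Rightarrow> 'a) \<Rightarrow> (nat \<Rightarrow> 'a \<Rightarrow> ereal) \<Rightarrow> 'a \<Rightarrow> 'a \<Rightarrow> ereal" where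
  "psi m gradG H x u = Max ((\<lambda>j. ereal (inner (gradG j x) (u - x)) + H j u - H j x) ` {..<m})"

definition prox_obj :: "nat \<Rightarrow> (nat \<Rightarrow> 'a::real_inner \<Rightarrow> 'a) \<Rightarrow> (nat \<Rightarrow> 'a \<Rightarrow> ereal) \<Rightarrow> real \<Rightarrow> 'a \<Rightarrow> 'a \<Rightarrow> ereal" where
  "prox_obj m gradG H \<alpha> x u = psi m gradG H x u + ereal (norm (u - x) ^ 2 / (2 * \<alpha>))"

definition p_alpha :: "nat \<Rightarrow> (nat \<Rightarrow> 'a::real_inner \<Rightarrow> 'a) \<Rightarrow> (nat \<Rightarrow> 'a \<Rightarrow> ereal) \<Rightarrow> real \<Rightarrow> 'a \<Rightarrow> 'a" where
  "p_alpha m gradG H \<alpha> x = (THE u. \<forall>v. prox_obj m gradG H \<alpha> x u \<le> prox_obj m gradG H \<alpha> x v)"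

definition theta_alpha :: "nat \<Rightarrow> (nat \<Rightarrow> 'a::real_inner \<Rightarrow> 'a) \<Rightarrow> (nat \<Rightarrow> 'a \<Rightarrow> ereal) \<Rightarrow> real \<Rightarrow> 'a \<Rightarrow> ereal" where
  "theta_alpha m gradG H \<alpha> x = prox_obj m gradG H \<alpha> x (p_alpha m gradG H \<alpha> x)"

definition armijo :: "(nat \<Rightarrow> 'a::real_inner \<Rightarrow> real) \<Rightarrow> (nat \<Rightarrow> 'a \<Rightarrow> 'a) \<Rightarrow> real \<Rightarrow> 'a \<Rightarrow> 'a \<Rightarrow> nat \<Rightarrow> real \<Rightarrow> bool" where
  "armijo G gradG \<gamma> x d j t \<longleftrightarrow>
     G j (x + t *\<^sub>R d) \<le> G j x + t * inner (gradG j x) d + t * (\<gamma> / 2) * (norm d) ^ 2"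

definition backtrack_chain :: "real \<Rightarrow> real \<Rightarrow> (nat \<Rightarrow> real) \<Rightarrow> nat \<Rightarrow> bool" where
  "backtrack_chain \<tau>1 \<tau>2 s N \<longleftrightarrow> (\<forall>i<N. \<tau>1 * s i \<le> s (Suc i) \<and> s (Suc i) \<le> \<tau>2 * s i)"

text \<open>One iteration (Steps 1--4) of the MPG algorithm from x to x', over all admissible
  choices of j_k^* and of the backtracking values.\<close>
definition mpg_step ::
  "nat \<Rightarrow> (nat \<Rightarrow> 'a::real_inner \<Rightarrow> real) \<Rightarrow> (nat \<Rightarrow> 'a \<Rightarrow> 'a) \<Rightarrow> (nat \<Rightarrow> 'a \<Rightarrow> ereal)
   \<Rightarrow> real \<Rightarrow> real \<Rightarrow> real \<Rightarrow> real \<Rightarrow> 'a \<Rightarrow> 'a \<Rightarrow> bool" where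
  "mpg_step m G gradG H \<alpha> \<gamma> \<tau>1 \<tau>2 x x' \<longleftrightarrow>
     (let p = p_alpha m gradG H \<alpha> x; d = p - x in
      theta_alpha m gradG H \<alpha> x \<noteq> 0 \<and>
      (\<exists>jstar t tk.
         jstar < m \<and> (\<forall>j<m. inner (gradG j x) d \<le> inner (gradG jstar x) d) \<and>
         \<comment> \<open>Step 3.1\<close>
         (\<exists>s N. s 0 = 1 \<and> backtrack_chain \<tau>1 \<tau>2 s N \<and>
                (\<forall>i<N. \<not> armijo G gradG \<gamma> x d jstar (s i)) \<and>
                armijo G gradG \<gamma> x d jstar (s N) \<and> t = s N) \<and>
         \<comment> \<open>Steps 3.2 / 3.3\<close>
         ((Fle m G H (x + t *\<^sub>R d) x \<and> tk = t) \<or>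
          (\<not> Fle m G H (x + t *\<^sub>R d) x \<and>
           (\<exists>s N. 1 \<le> N \<and> s 0 = t \<and> backtrack_chain \<tau>1 \<tau>2 s N \<and>
                  (\<forall>i. 1 \<le> i \<and> i < N \<longrightarrow> \<not> (\<forall>j<m. armijo G gradG \<gamma> x d j (s i))) \<and>
                  (\<forall>j<m. armijo G gradG \<gamma> x d j (s N)) \<and> tk = s N))) \<and>
         \<comment> \<open>Step 4\<close>
         x' = x + tk *\<^sub>R d))"

end

theory Submission
  imports Defs
begin

text \<open>On the common effective domain D of the H_j every H_j is finite, and psi_x is a maximum of
  finitely many convex functions that are continuous on D. So the proximal objective
  psi_x(u) + |u - x|^2/(2 alpha) is (1/alpha)-strongly convex and coercive on the closed convex set D:
  p = p_alpha(x) exists, and the three-point inequality at u = x gives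
  psi_x(p) + |p - x|^2/alpha <= psi_x(x) = 0.
  Every MPG step size t lies in [0,1], and the step is accepted either because F(x + t d) <= F(x) was
  tested directly, or because the Armijo test holds for every j. In the latter case convexity of H_j gives
  F_j(x + t d) <= F_j(x) + t (psi_x(p) + gamma/2 |d|^2) <= F_j(x), since gamma <= 2/alpha. By induction the iterates stay in D.\<close>

lemma continuous_on_Max:
  fixes f :: "'i \<Rightarrow> 'a::topological_space \<Rightarrow> 'b::linorder_topology"
  assumes "finite I" "I \<noteq> {}" "\<And>i. i \<in> I \<Longrightarrow> continuous_on S (f i)"
  shows "continuous_on S (\<lambda>u. Max ((\<lambda>i. f i u) ` I))"
  using assms
proof (induction I rule: finite_ne_induct)
  case (insert i I)
  then show ?case
    by (simp add: Max_insert continuous_on_max)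
qed simp

lemma convex_on_Max:
  assumes "finite I" "I \<noteq> {}" "\<And>i. i \<in> I \<Longrightarrow> convex_on S (f i)"
  shows "convex_on S (\<lambda>u. Max ((\<lambda>i. f i u) ` I))"
proof (rule convex_onI)
  show "convex S"
    using assms convex_on_imp_convex by blast
  fix t :: real and a b assume t: "0 < t" "t < 1" and ab: "a \<in> S" "b \<in> S"
  let ?M = "\<lambda>u. Max ((\<lambda>i. f i u) ` I)"
  let ?z = "(1 - t) *\<^sub>R a + t *\<^sub>R b"
  have "?M ?z \<in> (\<lambda>i. f i ?z) ` I"
    using assms(1,2) by simp
  then obtain i where i: "i \<in> I" and Mi: "?M ?z = f i ?z"
    by blast
  have "f i ?z \<le> (1 - t) * f i a + t * f i b"
    using convex_onD[OF assms(3)[OF i]] t ab by simp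
  also have "\<dots> \<le> (1 - t) * ?M a + t * ?M b"
    using t i assms(1) by (intro add_mono mult_left_mono) auto
  finally show "?M ?z \<le> (1 - t) * ?M a + t * ?M b"
    unfolding Mi .
qed

lemma convex_on_inner_diff: "convex S \<Longrightarrow> convex_on S (\<lambda>u. inner a (u - b))"
  by (rule convex_onI) (simp_all add: inner_diff_right inner_add_right algebra_simps)

lemma proper_convex_ext_convex_on:
  assumes "proper_convex_ext h"
  shows "convex_on {x. h x < \<infinity>} (\<lambda>x. real_of_ereal (h x))"
proof -
  let ?D = "{x. h x < \<infinity>}"
  have comb: "h ((1 - t) *\<^sub>R a + t *\<^sub>R b) \<le> ereal ((1 - t) * real_of_ereal (h a) + t * real_of_ereal (h b))"
    if ab: "a \<in> ?D" "b \<in> ?D" and t: "0 \<le> t" "t \<le> 1" for a b t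
  proof -
    obtain ra rb where "h a = ereal ra" "h b = ereal rb"
      using ab assms unfolding proper_convex_ext_def by (cases "h a"; cases "h b") auto
    moreover have "h ((1 - t) *\<^sub>R a + t *\<^sub>R b) \<le> ereal (1 - t) * h a + ereal t * h b"
      using assms t unfolding proper_convex_ext_def by blast
    ultimately show ?thesis
      by simp
  qed
  have "convex ?D"
    unfolding convex_alt
  proof (intro ballI allI impI)
    fix a b and t :: real
    assume "a \<in> ?D" "b \<in> ?D" "0 \<le> t \<and> t \<le> 1"
    then have "h ((1 - t) *\<^sub>R a + t *\<^sub>R b) \<le> ereal ((1 - t) * real_of_ereal (h a) + t * real_of_ereal (h b))"
      by (intro comb) auto
    then show "(1 - t) *\<^sub>R a + t *\<^sub>R b \<in> ?D"
      by (cases "h ((1 - t) *\<^sub>R a + t *\<^sub>R b)") auto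
  qed
  moreover have "real_of_ereal (h ((1 - t) *\<^sub>R a + t *\<^sub>R b))
      \<le> (1 - t) * real_of_ereal (h a) + t * real_of_ereal (h b)"
    if "a \<in> ?D" "b \<in> ?D" "0 \<le> t" "t \<le> 1" for a b t
    using comb[OF that] assms unfolding proper_convex_ext_def
    by (cases "h ((1 - t) *\<^sub>R a + t *\<^sub>R b)") auto
  ultimately show ?thesis
    by (intro convex_onI) auto
qed

lemma backtrack_chain_in_unit_interval:
  assumes "backtrack_chain \<tau>1 \<tau>2 s N" "0 \<le> \<tau>1" "\<tau>2 \<le> 1" "0 \<le> s 0" "s 0 \<le> 1" "i \<le> N"
  shows "0 \<le> s i \<and> s i \<le> 1"
  using assms(6)
proof (induction i)
  case (Suc i)
  then have "\<tau>1 * s i \<le> s (Suc i)" "s (Suc i) \<le> \<tau>2 * s i" "0 \<le> s i" "s i \<le> 1"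
    using assms(1) unfolding backtrack_chain_def by auto
  moreover have "\<tau>2 * s i \<le> 1 * s i"
    using assms(3) \<open>0 \<le> s i\<close> by (rule mult_right_mono)
  moreover have "0 \<le> \<tau>1 * s i"
    using assms(2) \<open>0 \<le> s i\<close> by simp
  ultimately show ?case
    by linarith
qed (use assms in simp)

lemma convex_on_lower_bound_outside_ball:
  fixes f :: "'a::euclidean_space \<Rightarrow> real"
  assumes f: "convex_on D f" "continuous_on D f" and D: "closed D" and x: "x \<in> D"
  obtains B where "0 \<le> B" "\<And>u. u \<in> D \<Longrightarrow> 1 \<le> norm (u - x) \<Longrightarrow> f x - B * norm (u - x) \<le> f u"
proof -
  let ?K = "D \<inter> cball x 1"
  have "compact ?K"
    using D by (intro closed_Int_compact) auto
  moreover have "?K \<noteq> {}"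
    using x by auto
  moreover have "continuous_on ?K f"
    using f(2) by (rule continuous_on_subset) auto
  ultimately have "\<exists>w\<in>?K. \<forall>y\<in>?K. f w \<le> f y"
    by (rule continuous_attains_inf)
  then obtain w where w_min: "\<And>y. y \<in> ?K \<Longrightarrow> f w \<le> f y"
    by blast
  define B where "B = max 0 (f x - f w)"
  show ?thesis
  proof (rule that)
    show "0 \<le> B"
      unfolding B_def by simp
    fix u assume u: "u \<in> D" and far: "1 \<le> norm (u - x)"
    define r where "r = norm (u - x)"
    have r: "0 < r" "0 \<le> 1 / r" "1 / r \<le> 1"
      using far unfolding r_def by (auto simp: divide_le_eq_1)
    \<comment> \<open>the point where the segment from x to u leaves the unit ball around x\<close>
    define y where "y = (1 - 1 / r) *\<^sub>R x + (1 / r) *\<^sub>R u"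
    have "y \<in> D"
      unfolding y_def using convex_on_imp_convex[OF f(1)] x u r
      by (simp add: convex_alt)
    moreover have "norm (y - x) = 1"
      using r unfolding y_def r_def by (simp add: algebra_simps flip: scaleR_diff_right)
    ultimately have "f x - B \<le> f y"
      using w_min[of y] unfolding B_def by (auto simp: dist_norm norm_minus_commute)
    also have "f y \<le> (1 - 1 / r) * f x + (1 / r) * f u"
      unfolding y_def using r x u by (intro convex_onD[OF f(1)]) auto
    finally have "r * (f x - B) \<le> r * ((1 - 1 / r) * f x + (1 / r) * f u)"
      using r by simp
    then show "f x - B * norm (u - x) \<le> f u"
      using r \<open>0 \<le> B\<close> far unfolding r_def[symmetric] by (simp add: algebra_simps)
  qed
qed

lemma prox_argmin_exists:
  fixes f :: "'a::euclidean_space \<Rightarrow> real"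
  assumes f: "convex_on D f" "continuous_on D f" and D: "closed D" and x: "x \<in> D" and \<alpha>: "0 < \<alpha>"
  obtains p where "p \<in> D"
    "\<And>v. v \<in> D \<Longrightarrow> f p + (norm (p - x))\<^sup>2 / (2 * \<alpha>) \<le> f v + (norm (v - x))\<^sup>2 / (2 * \<alpha>)"
proof -
  let ?\<Phi> = "\<lambda>v. f v + (norm (v - x))\<^sup>2 / (2 * \<alpha>)"
  obtain B where "0 \<le> B" and B: "\<And>u. u \<in> D \<Longrightarrow> 1 \<le> norm (u - x) \<Longrightarrow> f x - B * norm (u - x) \<le> f u"
    using convex_on_lower_bound_outside_ball[OF f D x] by metis
  \<comment> \<open>beyond this radius the quadratic term outgrows the linear lower bound of f, so points of D there are worse than x\<close>
  define R where "R = 2 * \<alpha> * B + 1"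
  let ?K = "D \<inter> cball x R"
  have "x \<in> ?K"
    using x \<alpha> \<open>0 \<le> B\<close> unfolding R_def by simp
  have "compact ?K"
    using D by (intro closed_Int_compact) auto
  moreover have "?K \<noteq> {}"
    using \<open>x \<in> ?K\<close> by blast
  moreover have "continuous_on ?K ?\<Phi>"
    using f(2) \<alpha> by (intro continuous_intros) (auto intro: continuous_on_subset)
  ultimately have "\<exists>p\<in>?K. \<forall>y\<in>?K. ?\<Phi> p \<le> ?\<Phi> y"
    by (rule continuous_attains_inf)
  then obtain p where "p \<in> ?K" and p_min: "\<And>y. y \<in> ?K \<Longrightarrow> ?\<Phi> p \<le> ?\<Phi> y"
    by blast
  show ?thesis
  proof (rule that)
    show "p \<in> D"
      using \<open>p \<in> ?K\<close> by blast
    fix v assume v: "v \<in> D"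
    show "?\<Phi> p \<le> ?\<Phi> v"
    proof (cases "v \<in> cball x R")
      case True
      then show ?thesis
        using v p_min by blast
    next
      case False
      define r where "r = norm (v - x)"
      have "R < r"
        using False unfolding r_def by (simp add: dist_norm norm_minus_commute)
      moreover have "1 \<le> R"
        using \<alpha> \<open>0 \<le> B\<close> unfolding R_def by simp
      ultimately have "1 \<le> r"
        by linarith
      have "?\<Phi> p \<le> f x"
        using p_min[OF \<open>x \<in> ?K\<close>] by simp
      also have "\<dots> \<le> f x + r * (r / (2 * \<alpha>) - B)"
        using \<open>R < r\<close> \<open>1 \<le> r\<close> \<alpha> unfolding R_def by (simp add: field_simps)
      also have "\<dots> \<le> ?\<Phi> v"
        using B[OF v] \<open>1 \<le> r\<close> unfolding r_def by (simp add: algebra_simps power2_eq_square)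
      finally show ?thesis .
    qed
  qed
qed

lemma prox_three_point:
  fixes f :: "'a::real_inner \<Rightarrow> real"
  assumes f: "convex_on D f" and \<alpha>: "0 < \<alpha>" and p: "p \<in> D" and v: "v \<in> D"
    and p_min: "\<And>u. u \<in> D \<Longrightarrow> f p + (norm (p - x))\<^sup>2 / (2 * \<alpha>) \<le> f u + (norm (u - x))\<^sup>2 / (2 * \<alpha>)"
  shows "f p + (norm (p - x))\<^sup>2 / (2 * \<alpha>) + (norm (v - p))\<^sup>2 / (2 * \<alpha>)
    \<le> f v + (norm (v - x))\<^sup>2 / (2 * \<alpha>)"
proof -
  have norm_add_sq: "(norm (a + b))\<^sup>2 = (norm a)\<^sup>2 + 2 * inner a b + (norm b)\<^sup>2" for a b :: 'a
    by (simp add: power2_norm_eq_inner inner_add_left inner_add_right inner_commute)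
  define A where "A = f v - f p + inner (p - x) (v - p) / \<alpha>"
  define c where "c = (norm (v - p))\<^sup>2 / (2 * \<alpha>)"
  \<comment> \<open>compare p with the points (1 - s) p + s v of the segment towards v, then let s tend to 0\<close>
  have "0 \<le> A + s * c" if s: "0 < s" "s \<le> 1" for s
  proof -
    let ?y = "(1 - s) *\<^sub>R p + s *\<^sub>R v"
    have "?y \<in> D"
      using convex_on_imp_convex[OF f] p v s by (simp add: convex_alt)
    have y_x: "?y - x = (p - x) + s *\<^sub>R (v - p)"
      by (simp add: algebra_simps)
    have "f p + (norm (p - x))\<^sup>2 / (2 * \<alpha>) \<le> f ?y + (norm (?y - x))\<^sup>2 / (2 * \<alpha>)"
      by (rule p_min[OF \<open>?y \<in> D\<close>])
    also have "f ?y \<le> (1 - s) * f p + s * f v"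
      using p v s by (intro convex_onD[OF f]) auto
    also have "(norm (?y - x))\<^sup>2 = (norm (p - x))\<^sup>2 + 2 * s * inner (p - x) (v - p) + s\<^sup>2 * (norm (v - p))\<^sup>2"
      unfolding y_x by (simp add: norm_add_sq power_mult_distrib)
    also have "(1 - s) * f p + s * f v + \<dots> / (2 * \<alpha>) = f p + (norm (p - x))\<^sup>2 / (2 * \<alpha>) + s * (A + s * c)"
      using \<alpha> unfolding A_def c_def by (simp add: field_simps power2_eq_square)
    finally show ?thesis
      using s by (simp add: zero_le_mult_iff)
  qed
  then have "0 \<le> A"
    by (intro tendsto_lowerbound[of "\<lambda>s. A + s * c" _ "at_right 0"])
       (auto intro!: tendsto_eq_intros eventually_at_rightI[of 0 1])
  moreover have "(norm (v - x))\<^sup>2 = (norm (v - p))\<^sup>2 + 2 * inner (p - x) (v - p) + (norm (p - x))\<^sup>2"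
    using norm_add_sq[of "v - p" "p - x"] by (simp add: inner_commute)
  then have "f v + (norm (v - x))\<^sup>2 / (2 * \<alpha>)
      = f p + (norm (p - x))\<^sup>2 / (2 * \<alpha>) + (norm (v - p))\<^sup>2 / (2 * \<alpha>) + A"
    using \<alpha> unfolding A_def by (simp add: field_simps)
  ultimately show ?thesis
    by linarith
qed

lemma Fle_domF:
  assumes "Fle m G H u v" "v \<in> domF m H"
  shows "u \<in> domF m H"
proof -
  have "H j u < \<infinity>" if "j < m" for j
  proof -
    have "ereal (G j u) + H j u \<le> ereal (G j v) + H j v"
      using assms(1) that unfolding Fle_def Fobj_def by blast
    moreover have "ereal (G j v) + H j v < \<infinity>"
      using assms(2) that unfolding domF_def by auto
    ultimately show ?thesis
      by (cases "H j u") auto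
  qed
  then show ?thesis
    unfolding domF_def by blast
qed

lemma mpg_stepE:
  assumes step: "mpg_step m G gradG H \<alpha> \<gamma> \<tau>1 \<tau>2 x x'" and \<tau>: "0 \<le> \<tau>1" "\<tau>2 \<le> 1"
  obtains t where "0 \<le> t" "t \<le> 1" "x' = x + t *\<^sub>R (p_alpha m gradG H \<alpha> x - x)"
    and "Fle m G H x' x \<or> (\<forall>j<m. armijo G gradG \<gamma> x (p_alpha m gradG H \<alpha> x - x) j t)"
proof -
  let ?d = "p_alpha m gradG H \<alpha> x - x"
  obtain t tk where "\<exists>s N. s 0 = 1 \<and> backtrack_chain \<tau>1 \<tau>2 s N \<and> t = s N"
    and accept: "(Fle m G H (x + t *\<^sub>R ?d) x \<and> tk = t) \<or>
      (\<exists>s N. s 0 = t \<and> backtrack_chain \<tau>1 \<tau>2 s N \<and> (\<forall>j<m. armijo G gradG \<gamma> x ?d j (s N)) \<and> tk = s N)"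
    and x': "x' = x + tk *\<^sub>R ?d"
    using step unfolding mpg_step_def Let_def by (elim conjE exE) blast
  then obtain s N where s: "s 0 = 1" "backtrack_chain \<tau>1 \<tau>2 s N" "t = s N"
    by blast
  have t: "0 \<le> t" "t \<le> 1"
    using backtrack_chain_in_unit_interval[OF s(2) \<tau>, of N] s by simp_all
  from accept show thesis
  proof
    assume "Fle m G H (x + t *\<^sub>R ?d) x \<and> tk = t"
    then show thesis
      using that[of tk] t x' by simp
  next
    assume "\<exists>s N. s 0 = t \<and> backtrack_chain \<tau>1 \<tau>2 s N \<and> (\<forall>j<m. armijo G gradG \<gamma> x ?d j (s N)) \<and> tk = s N"
    then obtain s' N' where s': "s' 0 = t" "backtrack_chain \<tau>1 \<tau>2 s' N'" "tk = s' N'"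
      and "\<forall>j<m. armijo G gradG \<gamma> x ?d j tk"
      by blast
    moreover have "0 \<le> tk" "tk \<le> 1"
      using backtrack_chain_in_unit_interval[OF s'(2) \<tau>, of N'] s' t by simp_all
    ultimately show thesis
      using that[of tk] x' by simp
  qed
qed

definition psi_real ::
  "nat \<Rightarrow> (nat \<Rightarrow> 'a::real_inner \<Rightarrow> 'a) \<Rightarrow> (nat \<Rightarrow> 'a \<Rightarrow> ereal) \<Rightarrow> 'a \<Rightarrow> 'a \<Rightarrow> real" where
  "psi_real m gradG H x u =
     Max ((\<lambda>j. inner (gradG j x) (u - x) + real_of_ereal (H j u) - real_of_ereal (H j x)) ` {..<m})"

context
  fixes m :: nat and H :: "nat \<Rightarrow> 'a::euclidean_space \<Rightarrow> ereal"
  assumes H_proper_convex: "\<And>j. j < m \<Longrightarrow> proper_convex_ext (H j)"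
begin

lemma H_finite_on_domF: "u \<in> domF m H \<Longrightarrow> j < m \<Longrightarrow> \<bar>H j u\<bar> \<noteq> \<infinity>"
  using H_proper_convex unfolding domF_def proper_convex_ext_def by (cases "H j u") auto

lemma Fobj_eq_real:
  assumes "u \<in> domF m H" "j < m"
  shows "Fobj G H j u = ereal (G j u + real_of_ereal (H j u))"
  using H_finite_on_domF[OF assms] unfolding Fobj_def by (cases "H j u") auto

lemma convex_domF: "convex (domF m H)"
proof -
  have "domF m H = (\<Inter>j\<in>{..<m}. {u. H j u < \<infinity>})"
    unfolding domF_def by blast
  also have "convex \<dots>"
    using convex_on_imp_convex[OF proper_convex_ext_convex_on[OF H_proper_convex]]
    by (intro convex_INT) simp
  finally show ?thesis .
qed

lemma convex_on_domF_H: "j < m \<Longrightarrow> convex_on (domF m H) (\<lambda>u. real_of_ereal (H j u))"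
  by (rule convex_on_subset[OF proper_convex_ext_convex_on[OF H_proper_convex] _ convex_domF])
     (auto simp: domF_def)

context
  fixes gradG :: "nat \<Rightarrow> 'a \<Rightarrow> 'a" and x :: 'a
  assumes m_pos: "0 < m" and x_dom: "x \<in> domF m H"
begin

lemma psi_eq_psi_real: "u \<in> domF m H \<Longrightarrow> psi m gradG H x u = ereal (psi_real m gradG H x u)"
proof -
  assume u: "u \<in> domF m H"
  let ?g = "\<lambda>j. inner (gradG j x) (u - x) + real_of_ereal (H j u) - real_of_ereal (H j x)"
  have img: "(\<lambda>j. ereal (inner (gradG j x) (u - x)) + H j u - H j x) ` {..<m} = ereal ` ?g ` {..<m}"
    unfolding image_image
  proof (rule image_cong)
    fix j assume "j \<in> {..<m}"
    then have "\<bar>H j u\<bar> \<noteq> \<infinity>" "\<bar>H j x\<bar> \<noteq> \<infinity>"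
      using H_finite_on_domF u x_dom by auto
    then show "ereal (inner (gradG j x) (u - x)) + H j u - H j x = ereal (?g j)"
      by (cases "H j u"; cases "H j x") auto
  qed simp
  have "psi m gradG H x u = Max (ereal ` ?g ` {..<m})"
    unfolding psi_def img ..
  also have "\<dots> = ereal (Max (?g ` {..<m}))"
    by (rule mono_Max_commute[symmetric]) (use m_pos in \<open>simp_all add: mono_def lessThan_empty_iff\<close>)
  finally show ?thesis
    unfolding psi_real_def .
qed

lemma psi_outside_domF: "u \<notin> domF m H \<Longrightarrow> psi m gradG H x u = \<infinity>"
proof -
  assume "u \<notin> domF m H"
  then obtain j where j: "j < m" "H j u = \<infinity>"
    unfolding domF_def by auto
  have "ereal (inner (gradG j x) (u - x)) + H j u - H j x = \<infinity>"
    using j H_finite_on_domF[OF x_dom j(1)] by auto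
  moreover have "ereal (inner (gradG j x) (u - x)) + H j u - H j x \<le> psi m gradG H x u"
    unfolding psi_def using j(1) by (intro Max_ge) auto
  ultimately show ?thesis
    by (simp add: top_ereal_def top_unique)
qed

lemma psi_real_self: "psi_real m gradG H x x = 0"
  using m_pos unfolding psi_real_def by (simp add: image_constant_conv lessThan_empty_iff)

lemma convex_on_psi_real: "convex_on (domF m H) (psi_real m gradG H x)"
proof -
  have "convex_on (domF m H)
      (\<lambda>u. inner (gradG j x) (u - x) + real_of_ereal (H j u) - real_of_ereal (H j x))" if "j < m" for j
    by (intro convex_on_diff convex_on_add convex_on_inner_diff convex_on_domF_H that convex_domF)
       (simp add: concave_on_const convex_domF)
  then show ?thesis
    unfolding psi_real_def using m_pos by (intro convex_on_Max) auto
qed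

lemma continuous_on_psi_real:
  assumes H_cont: "\<And>j. j < m \<Longrightarrow> continuous_on {u. H j u \<noteq> \<infinity>} (H j)"
  shows "continuous_on (domF m H) (psi_real m gradG H x)"
proof -
  have "continuous_on (domF m H) (\<lambda>u. real_of_ereal (H j u))" if j: "j < m" for j
  proof -
    have "continuous_on (domF m H) (H j)"
      using H_cont[OF j] by (rule continuous_on_subset) (auto simp: domF_def j)
    then show ?thesis
      using continuous_on_iff_real[of "domF m H" "H j"] H_finite_on_domF j by (simp add: comp_def)
  qed
  then show ?thesis
    unfolding psi_real_def using m_pos by (intro continuous_on_Max continuous_intros) auto
qed

context
  fixes \<alpha> :: real
  assumes H_cont: "\<And>j. j < m \<Longrightarrow> continuous_on {u. H j u \<noteq> \<infinity>} (H j)"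
    and dom_closed: "closed (domF m H)"
    and \<alpha>: "0 < \<alpha>"
begin

lemma p_alpha_argmin:
  shows "p_alpha m gradG H \<alpha> x \<in> domF m H"
    and "\<And>v. v \<in> domF m H \<Longrightarrow>
      psi_real m gradG H x (p_alpha m gradG H \<alpha> x) + (norm (p_alpha m gradG H \<alpha> x - x))\<^sup>2 / (2 * \<alpha>)
      \<le> psi_real m gradG H x v + (norm (v - x))\<^sup>2 / (2 * \<alpha>)"
proof -
  let ?\<Phi> = "\<lambda>v. psi_real m gradG H x v + (norm (v - x))\<^sup>2 / (2 * \<alpha>)"
  have prox_in: "prox_obj m gradG H \<alpha> x v = ereal (?\<Phi> v)" if "v \<in> domF m H" for v
    using that unfolding prox_obj_def by (simp add: psi_eq_psi_real)
  have prox_out: "prox_obj m gradG H \<alpha> x v = \<infinity>" if "v \<notin> domF m H" for v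
    using that unfolding prox_obj_def by (simp add: psi_outside_domF)
  obtain p where p: "p \<in> domF m H" and p_min: "\<And>v. v \<in> domF m H \<Longrightarrow> ?\<Phi> p \<le> ?\<Phi> v"
    using prox_argmin_exists[OF convex_on_psi_real continuous_on_psi_real[OF H_cont] dom_closed x_dom \<alpha>]
    by blast
  have "p_alpha m gradG H \<alpha> x = p"
    unfolding p_alpha_def
  proof (rule the_equality)
    show "\<forall>v. prox_obj m gradG H \<alpha> x p \<le> prox_obj m gradG H \<alpha> x v"
      using p p_min prox_in prox_out by (metis ereal_less_eq(1,3))
  next
    fix q assume q_min: "\<forall>v. prox_obj m gradG H \<alpha> x q \<le> prox_obj m gradG H \<alpha> x v"
    have q: "q \<in> domF m H"
      using q_min[rule_format, of x] prox_in[OF x_dom] prox_out by force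
    \<comment> \<open>strong convexity of the proximal objective makes its minimiser unique\<close>
    have "?\<Phi> p + (norm (q - p))\<^sup>2 / (2 * \<alpha>) \<le> ?\<Phi> q"
      by (rule prox_three_point[OF convex_on_psi_real \<alpha> p q p_min])
    moreover have "?\<Phi> q \<le> ?\<Phi> p"
      using q_min[rule_format, of p] prox_in[OF p] prox_in[OF q] by simp
    ultimately have "(norm (q - p))\<^sup>2 / (2 * \<alpha>) \<le> 0"
      by linarith
    then show "q = p"
      using \<alpha> by (simp add: divide_le_0_iff)
  qed
  then show "p_alpha m gradG H \<alpha> x \<in> domF m H"
    and "\<And>v. v \<in> domF m H \<Longrightarrow> ?\<Phi> (p_alpha m gradG H \<alpha> x) \<le> ?\<Phi> v"
    using p p_min by simp_all
qed

lemma psi_real_p_alpha_le: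
  "psi_real m gradG H x (p_alpha m gradG H \<alpha> x) + (norm (p_alpha m gradG H \<alpha> x - x))\<^sup>2 / \<alpha> \<le> 0"
  using prox_three_point[OF convex_on_psi_real \<alpha> p_alpha_argmin(1) x_dom p_alpha_argmin(2)]
  by (simp add: psi_real_self norm_minus_commute field_simps)

lemma armijo_imp_Fle:
  assumes \<gamma>: "\<gamma> \<le> 2 / \<alpha>" and t: "0 \<le> t" "t \<le> 1"
    and armijo_all: "\<forall>j<m. armijo G gradG \<gamma> x (p_alpha m gradG H \<alpha> x - x) j t"
  shows "Fle m G H (x + t *\<^sub>R (p_alpha m gradG H \<alpha> x - x)) x"
  unfolding Fle_def
proof (intro allI impI)
  fix j assume j: "j < m"
  let ?p = "p_alpha m gradG H \<alpha> x"
  let ?d = "?p - x"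
  let ?z = "x + t *\<^sub>R ?d"
  let ?h = "\<lambda>u. real_of_ereal (H j u)"
  have z: "?z = (1 - t) *\<^sub>R x + t *\<^sub>R ?p"
    by (simp add: algebra_simps)
  have "?z \<in> domF m H"
    unfolding z using convex_domF x_dom p_alpha_argmin(1) t by (simp add: convex_alt)
  have h_z: "?h ?z \<le> (1 - t) * ?h x + t * ?h ?p"
    unfolding z using x_dom p_alpha_argmin(1) t by (intro convex_onD[OF convex_on_domF_H[OF j]]) auto
  have G_z: "G j ?z \<le> G j x + t * inner (gradG j x) ?d + t * (\<gamma> / 2) * (norm ?d)\<^sup>2"
    using armijo_all j unfolding armijo_def by blast
  have "inner (gradG j x) ?d + ?h ?p - ?h x \<le> psi_real m gradG H x ?p"
    unfolding psi_real_def using j by (intro Max_ge) auto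
  moreover have "\<gamma> / 2 * (norm ?d)\<^sup>2 \<le> (norm ?d)\<^sup>2 / \<alpha>"
  proof -
    have "\<gamma> / 2 \<le> 1 / \<alpha>"
      using \<gamma> \<alpha> by (simp add: field_simps)
    then show ?thesis
      using mult_right_mono[of "\<gamma> / 2" "1 / \<alpha>" "(norm ?d)\<^sup>2"] by simp
  qed
  ultimately have "inner (gradG j x) ?d + ?h ?p - ?h x + \<gamma> / 2 * (norm ?d)\<^sup>2 \<le> 0"
    using psi_real_p_alpha_le by linarith
  then have "t * (inner (gradG j x) ?d + ?h ?p - ?h x + \<gamma> / 2 * (norm ?d)\<^sup>2) \<le> 0"
    by (rule mult_nonneg_nonpos[OF t(1)])
  then have "G j ?z + ?h ?z \<le> G j x + ?h x"
    using G_z h_z by (simp add: algebra_simps)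
  then show "Fobj G H j ?z \<le> Fobj G H j x"
    unfolding Fobj_eq_real[OF \<open>?z \<in> domF m H\<close> j] Fobj_eq_real[OF x_dom j] by simp
qed

lemma mpg_step_Fle:
  assumes \<gamma>: "\<gamma> \<le> 2 / \<alpha>" and \<tau>: "0 \<le> \<tau>1" "\<tau>2 \<le> 1"
    and step: "mpg_step m G gradG H \<alpha> \<gamma> \<tau>1 \<tau>2 x x'"
  shows "Fle m G H x' x"
proof -
  obtain t where t: "0 \<le> t" "t \<le> 1" and x': "x' = x + t *\<^sub>R (p_alpha m gradG H \<alpha> x - x)"
    and accepted: "Fle m G H x' x \<or> (\<forall>j<m. armijo G gradG \<gamma> x (p_alpha m gradG H \<alpha> x - x) j t)"
    by (rule mpg_stepE[OF step \<tau>])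
  show ?thesis
    using accepted armijo_imp_Fle[OF \<gamma> t] unfolding x' by blast
qed

end
end
end

theorem mainTheorem3:
  fixes m :: nat
    and G :: "nat \<Rightarrow> 'a::euclidean_space \<Rightarrow> real"
    and gradG :: "nat \<Rightarrow> 'a \<Rightarrow> 'a"
    and H :: "nat \<Rightarrow> 'a \<Rightarrow> ereal"
    and \<alpha> \<gamma> \<tau>1 \<tau>2 :: real
    and x :: "nat \<Rightarrow> 'a"
    and k :: nat
  assumes m_pos: "0 < m"
    and G_grad: "\<And>j y. j < m \<Longrightarrow> GDERIV (G j) y :> gradG j y"
    and G_C1: "\<And>j. j < m \<Longrightarrow> continuous_on UNIV (gradG j)"
    and G_convex: "\<And>j. j < m \<Longrightarrow> convex_on UNIV (G j)"
    and H_pc: "\<And>j. j < m \<Longrightarrow> proper_convex_ext (H j)"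
    and H_cont: "\<And>j. j < m \<Longrightarrow> continuous_on {y. H j y \<noteq> \<infinity>} (H j)"
    and dom_ne: "domF m H \<noteq> {}"
    and dom_closed: "closed (domF m H)"
    and alpha: "0 < \<alpha>"
    and gamma: "0 < \<gamma>" "\<gamma> < 2 / \<alpha>"
    and tau: "0 < \<tau>1" "\<tau>1 < \<tau>2" "\<tau>2 < 1"
    and x0: "x 0 \<in> domF m H"
    and gen: "\<And>i. i \<le> k \<Longrightarrow> mpg_step m G gradG H \<alpha> \<gamma> \<tau>1 \<tau>2 (x i) (x (Suc i))"
  shows "\<forall>j<m. Fobj G H j (x (Suc k)) \<le> Fobj G H j (x k)"
proof -
  have \<gamma>: "\<gamma> \<le> 2 / \<alpha>" and \<tau>: "0 \<le> \<tau>1" "\<tau>2 \<le> 1"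
    using gamma tau by simp_all
  have step_Fle: "Fle m G H (x (Suc i)) (x i)" if "i \<le> k" "x i \<in> domF m H" for i
    by (rule mpg_step_Fle[OF H_pc m_pos that(2) H_cont dom_closed alpha \<gamma> \<tau> gen[OF that(1)]])
  have dom: "x i \<in> domF m H" if "i \<le> k" for i
    using that
  proof (induction i)
    case (Suc i)
    then have "i \<le> k" "x i \<in> domF m H"
      by simp_all
    then show ?case
      using Fle_domF[OF step_Fle[of i]] by blast
  qed (use x0 in simp)
  have "Fle m G H (x (Suc k)) (x k)"
    using step_Fle dom by simp
  then show ?thesis
    unfolding Fle_def .
qed

end
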